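(* Let $L\geq 2$ and consider the alternating minimization algorithm described below for minimizing $S$. Suppose $\sigma\in C^2(\mathbb{R})$ with $|\sigma|\leq M_0$, $|\sigma'|\leq M_1$, $|\sigma''|\leq M_2$ on $\mathbb{R}$ for some $M_0,M_1,M_2>0$, let $R>0$, and assume all parameters $\{W_l\}_{l=1}^L,\{b_l,c_l\}_{l=1}^{L-1}$ produced by the algorithm have Frobenius norm at most $R$. Let $C_1,\dots,C_L>0$ be constants such that, at every update step, the partial gradient $\nabla_{c_l}S$ (as a function of $c_l$ with all other parameters fixed at their current values) is $C_l$-Lipschitz on $\mathbb{R}^{M\times N}$ for $l=1,\dots,L-1$, and $\nabla_{W_L}S$ (as a function of $W_L$, others fixed) is $C_L$-Lipschitz on $\{W_L:\|W_L\|_{\mathrm F}\le R\}$, all with respect to the Frobenius norm. If the learning rates satisfy $\tau_l^k\in(0,2/C_l]$ for all $l$ and $k$, then $$S(\Theta^{k+1})\leq S(\Theta^k)\qquad\text{for all }k\geq 0,$$ where $\Theta^k=\{W_L^k,W_l^k,b_l^k,c_l^k\}_{l=1}^{L-1}$ denotes the parameters after the $k$-th iteration.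
   Context: Data: $X\in\mathbb{R}^{d\times N}$, $A\in\mathbb{R}^{J\times N}$ with one-hot columns, $J\ge2$. For $\boldsymbol z\in\mathbb{R}^J$, one-hot $\boldsymbol\alpha$: $\ell(\boldsymbol z,\boldsymbol\alpha)=-\sum_j\alpha_j\ln\big(e^{z_j}/\sum_k e^{z_k}\big)$; $\mathcal{L}_{\mathrm{vec}}(Z,A)=[\ell(\boldsymbol z_n,\boldsymbol\alpha_n)]_{n=1}^N$ for $Z=[\boldsymbol z_1\cdots\boldsymbol z_N]$. Parameters $W_1\in\mathbb{R}^{M\times d}$, $W_2,\dots,W_{L-1}\in\mathbb{R}^{M\times M}$, $W_L\in\mathbb{R}^{J\times M}$, $b_l\in\mathbb{R}^M$, $c_l\in\mathbb{R}^{M\times N}$; $\sigma$ entrywise; $\mathbf 1\in\mathbb{R}^N$ all-ones. $\omega_l=\prod_{j=l+1}^L\|W_j\|_{\mathrm F}^2$ and $S=\|\mathcal{L}_{\mathrm{vec}}(W_L\sigma(c_{L-1}),A)\|_2^2+\sum_{l=2}^{L-1}\omega_l\|W_l\sigma(c_{l-1})+b_l\mathbf 1^\top-c_l\|_{\mathrm F}^2+\omega_1\|W_1X+b_1\mathbf 1^\top-c_1\|_{\mathrm F}^2$. Auxiliary quantities (computed from current parameter values): $V_1=X$, $V_l=\sigma(c_{l-1})$ for $2\le l\le L-1$; $B_l=c_l-b_l\mathbf 1^\top$; $\lambda_1=0$, $\lambda_2=\|W_1V_1-B_1\|_{\mathrm F}^2$, and for $3\le l\le L-1$, $\lambda_l=\sum_{i=1}^{l-2}\big(\prod_{j=i+1}^{l-1}\|W_j\|_{\mathrm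 F}^2\big)\|W_iV_i-B_i\|_{\mathrm F}^2+\|W_{l-1}V_{l-1}-B_{l-1}\|_{\mathrm F}^2$. Algorithm: starting from an initialization, iteration $k=0,1,\dots$ performs in order: (1) $W_L\leftarrow W_L-\tau_L^k\nabla_{W_L}S$; (2) for $l=L-1,L-2,\dots,1$: $c_l\leftarrow c_l-\tau_l^k\nabla_{c_l}S$; then $W_l\leftarrow$ a least-squares solution of $W_l[V_l~~\sqrt{\lambda_l}I]=[B_l~~O]$ (i.e. a minimizer of $\|W_lV_l-B_l\|_{\mathrm F}^2+\lambda_l\|W_l\|_{\mathrm F}^2$); then $b_l\leftarrow$ the least-squares solution of $b_l\mathbf 1^\top=c_l-W_lV_l$ (the mean of the columns of $c_l-W_lV_l$). Each step uses the most recently updated values of all parameters; partial gradients are with respect to the Frobenius inner product. *)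

theory Defs
  imports "HOL-Analysis.Analysis"
begin

text \<open>Dimensions are type-indexed: 'd = input dimension d, 'n = number of samples N,
  'm = width M, 'j = number of classes J.  A matrix in R^{p x q} is "real^'q^'p"
  (rows indexed by 'p).  The norm on such matrices is the Frobenius norm and
  the inner product is the Frobenius inner product.\<close>

record ('d::finite, 'n::finite, 'm::finite, 'j::finite) params =
  W1 :: "real^'d^'m"
  Wm :: "nat \<Rightarrow> real^'m^'m"    \<comment> \<open>W_l, M x M, used for 2 <= l <= L-1\<close>
  WL :: "real^'m^'j"
  bb :: "nat \<Rightarrow> real^'m"        \<comment> \<open>b_l, used for 1 <= l <= L-1\<close>
  cc :: "nat \<Rightarrow> real^'n^'m"     \<comment> \<open>c_l, used for 1 <= l <= L-1\<close>

definition grad :: "('a::real_inner \<Rightarrow> real) \<Rightarrow> 'a \<Rightarrow> 'a" where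
  "grad f x = (THE D. GDERIV f x :> D)"

definition act :: "(real \<Rightarrow> real) \<Rightarrow> real^'n^'m \<Rightarrow> real^'n^'m" where
  "act \<sigma> Z = (\<chi> i k. \<sigma> (Z $ i $ k))"

definition bias1 :: "real^'m \<Rightarrow> real^'n^'m" where
  "bias1 v = (\<chi> i k. v $ i)"

definition onehot_cols :: "real^'n^'j \<Rightarrow> bool" where
  "onehot_cols A \<longleftrightarrow> (\<forall>k. \<exists>j. A $ j $ k = 1 \<and> (\<forall>j'. j' \<noteq> j \<longrightarrow> A $ j' $ k = 0))"

definition xent :: "real^'j \<Rightarrow> real^'j \<Rightarrow> real" where
  "xent z \<alpha> = - (\<Sum>j\<in>UNIV. \<alpha> $ j * ln (exp (z $ j) / (\<Sum>k\<in>UNIV. exp (z $ k))))"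

definition Lvec :: "real^'n^'j \<Rightarrow> real^'n^'j \<Rightarrow> real^'n" where
  "Lvec Z A = (\<chi> k. xent (column k Z) (column k A))"

definition Wnorm :: "nat \<Rightarrow> ('d::finite,'n::finite,'m::finite,'j::finite,'z) params_scheme \<Rightarrow> nat \<Rightarrow> real" where
  "Wnorm L p j = (if j = 1 then norm (W1 p) else if j = L then norm (WL p) else norm (Wm p j))"

definition omega :: "nat \<Rightarrow> ('d::finite,'n::finite,'m::finite,'j::finite,'z) params_scheme \<Rightarrow> nat \<Rightarrow> real" where
  "omega L p l = (\<Prod>j\<in>{l+1..L}. (Wnorm L p j)\<^sup>2)"

definition Sobj :: "(real \<Rightarrow> real) \<Rightarrow> real^'n^'d \<Rightarrow> real^'n^'j \<Rightarrow> nat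
    \<Rightarrow> ('d::finite,'n::finite,'m::finite,'j::finite) params \<Rightarrow> real" where
  "Sobj \<sigma> X A L p =
     (norm (Lvec (WL p ** act \<sigma> (cc p (L - 1))) A))\<^sup>2
     + (\<Sum>l\<in>{2..L-1}. omega L p l * (norm (Wm p l ** act \<sigma> (cc p (l - 1)) + bias1 (bb p l) - cc p l))\<^sup>2)
     + omega L p 1 * (norm (W1 p ** X + bias1 (bb p 1) - cc p 1))\<^sup>2"

text \<open>Residual ||W_i V_i - B_i||_F^2 for 1 <= i <= L-1, with V_1 = X, V_i = sigma(c_{i-1}),
  B_i = c_i - b_i 1^T.\<close>
definition resid :: "(real \<Rightarrow> real) \<Rightarrow> real^'n^'d \<Rightarrow> ('d::finite,'n::finite,'m::finite,'j::finite) params \<Rightarrow> nat \<Rightarrow> real" where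
  "resid \<sigma> X p i =
     (if i = 1 then (norm (W1 p ** X - (cc p 1 - bias1 (bb p 1))))\<^sup>2
      else (norm (Wm p i ** act \<sigma> (cc p (i - 1)) - (cc p i - bias1 (bb p i))))\<^sup>2)"

text \<open>The single formula
  lambda_l = sum_{i=1}^{l-1} (prod_{j=i+1}^{l-1} ||W_j||_F^2) ||W_i V_i - B_i||_F^2
  gives lambda_1 = 0, lambda_2 = ||W_1 V_1 - B_1||^2, and for l >= 3 exactly the paper's
  formula (the term i = l-1 has an empty product).\<close>
definition lam :: "(real \<Rightarrow> real) \<Rightarrow> real^'n^'d \<Rightarrow> nat \<Rightarrow> ('d::finite,'n::finite,'m::finite,'j::finite) params \<Rightarrow> nat \<Rightarrow> real" where
  "lam \<sigma> X L p l = (\<Sum>i\<in>{1..l-1}. (\<Prod>j\<in>{i+1..l-1}. (Wnorm L p j)\<^sup>2) * resid \<sigma> X p i)"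

text \<open>W is a least-squares solution of W [V  sqrt(lambda) I] = [B  O], i.e. a minimizer of
  ||W V - B||_F^2 + lambda ||W||_F^2.\<close>
definition is_ls :: "real^'a^'b \<Rightarrow> real^'n^'a \<Rightarrow> real^'n^'b \<Rightarrow> real \<Rightarrow> bool" where
  "is_ls W V B lm \<longleftrightarrow> (\<forall>W'. (norm (W ** V - B))\<^sup>2 + lm * (norm W)\<^sup>2 \<le> (norm (W' ** V - B))\<^sup>2 + lm * (norm W')\<^sup>2)"

text \<open>Mean of the columns of a matrix (least-squares solution of b 1^T = Z).\<close>
definition colmean :: "real^'n^'m \<Rightarrow> real^'m" where
  "colmean Z = (\<chi> i. (\<Sum>k\<in>UNIV. Z $ i $ k) / real CARD('n))"

definition WL_step :: "(real \<Rightarrow> real) \<Rightarrow> real^'n^'d \<Rightarrow> real^'n^'j \<Rightarrow> nat \<Rightarrow> real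
    \<Rightarrow> ('d::finite,'n::finite,'m::finite,'j::finite) params \<Rightarrow> ('d,'n,'m,'j) params" where
  "WL_step \<sigma> X A L \<tau> p =
     p\<lparr>WL := WL p - \<tau> *\<^sub>R grad (\<lambda>w. Sobj \<sigma> X A L (p\<lparr>WL := w\<rparr>)) (WL p)\<rparr>"

text \<open>Step (2) for layer l (1 <= l <= L-1): gradient step on c_l, then a least-squares W_l,
  then b_l := column mean of c_l - W_l V_l.  q is a possible result (the least-squares
  solution W_l need not be unique).\<close>
definition layer_step :: "(real \<Rightarrow> real) \<Rightarrow> real^'n^'d \<Rightarrow> real^'n^'j \<Rightarrow> nat \<Rightarrow> nat \<Rightarrow> real
    \<Rightarrow> ('d::finite,'n::finite,'m::finite,'j::finite) params \<Rightarrow> ('d,'n,'m,'j) params \<Rightarrow> bool" where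
  "layer_step \<sigma> X A L l \<tau> p q \<longleftrightarrow>
     (let p1 = p\<lparr>cc := (cc p)(l := cc p l - \<tau> *\<^sub>R
                    grad (\<lambda>v. Sobj \<sigma> X A L (p\<lparr>cc := (cc p)(l := v)\<rparr>)) (cc p l))\<rparr>
      in if l = 1 then
           (\<exists>W. is_ls W X (cc p1 1 - bias1 (bb p1 1)) (lam \<sigma> X L p1 1) \<and>
                q = p1\<lparr>W1 := W, bb := (bb p1)(1 := colmean (cc p1 1 - W ** X))\<rparr>)
         else
           (\<exists>W. is_ls W (act \<sigma> (cc p1 (l - 1))) (cc p1 l - bias1 (bb p1 l)) (lam \<sigma> X L p1 l) \<and>
                q = p1\<lparr>Wm := (Wm p1)(l := W),
                       bb := (bb p1)(l := colmean (cc p1 l - W ** act \<sigma> (cc p1 (l - 1))))\<rparr>))"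

end

theory Submission
  imports Defs
begin

text \<open>Each of the \<open>L\<close> sub-steps of an iteration does not increase \<open>S\<close>.
  For the gradient steps on \<open>W\<^sub>L\<close> and \<open>c\<^sub>l\<close> this is the descent lemma: for a
  \<open>C\<close>-Lipschitz gradient, \<open>f (x - \<tau> \<nabla>f x) \<le> f x - \<tau> (1 - C \<tau> / 2) \<parallel>\<nabla>f x\<parallel>\<^sup>2\<close>,
  and \<open>\<tau> \<le> 2 / C\<close>.
  For the updates of \<open>W\<^sub>l\<close> and \<open>b\<^sub>l\<close>, write \<open>S\<close> as a part not involving \<open>(W\<^sub>l, b\<^sub>l)\<close>
  plus \<open>\<omega>\<^sub>l (\<parallel>W\<^sub>l V\<^sub>l - B\<^sub>l\<parallel>\<^sup>2 + \<lambda>\<^sub>l \<parallel>W\<^sub>l\<parallel>\<^sup>2)\<close> with \<open>\<omega>\<^sub>l \<ge> 0\<close>: the weights \<open>\<omega>\<^sub>i\<close>, \<open>i < l\<close>,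
  all contain the factor \<open>\<parallel>W\<^sub>l\<parallel>\<^sup>2\<close>, and collecting them produces \<open>\<lambda>\<^sub>l\<close>. The least-squares
  \<open>W\<^sub>l\<close> minimises the bracket over \<open>W\<^sub>l\<close>, and the column mean minimises it over \<open>b\<^sub>l\<close>.

  Of the hypotheses on \<open>\<sigma>\<close> only differentiability is needed: the bounds on \<open>\<sigma>\<close> and its
  derivatives serve in the paper to produce the Lipschitz constants, which are assumed here.\<close>

lemma has_derivative_vec_lambda:
  fixes f :: "'a::euclidean_space \<Rightarrow> 'i::finite \<Rightarrow> 'b::real_normed_vector"
  assumes "\<And>i. ((\<lambda>x. f x i) has_derivative f' i) F"
  shows "((\<lambda>x. \<chi> i. f x i) has_derivative (\<lambda>h. \<chi> i. f' i h)) F"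
proof -
  have "linear (\<lambda>h. \<chi> i. f' i h)"
    using assms[THEN has_derivative_linear] by (simp add: linear_iff vec_eq_iff)
  then have "bounded_linear (\<lambda>h. \<chi> i. f' i h)"
    by (simp add: linear_conv_bounded_linear)
  with assms show ?thesis
    unfolding has_derivative_def by (auto intro!: vec_tendstoI)
qed

lemma differentiable_vec_lambda [derivative_intros]:
  fixes f :: "'a::euclidean_space \<Rightarrow> 'i::finite \<Rightarrow> 'b::real_normed_vector"
  assumes "\<And>i. (\<lambda>x. f x i) differentiable F"
  shows "(\<lambda>x. \<chi> i. f x i) differentiable F"
proof -
  obtain f' where "\<And>i. ((\<lambda>x. f x i) has_derivative f' i) F"
    using assms unfolding differentiable_def by metis
  then show ?thesis
    unfolding differentiable_def by (blast intro: has_derivative_vec_lambda)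
qed

lemma differentiable_vec_nth [derivative_intros]:
  "f differentiable F \<Longrightarrow> (\<lambda>x. f x $ i) differentiable F"
  unfolding differentiable_def using bounded_linear.has_derivative[OF bounded_linear_vec_nth] by blast

lemma differentiable_prod [derivative_intros]:
  fixes f :: "'i \<Rightarrow> 'a::real_normed_vector \<Rightarrow> 'b::real_normed_field"
  assumes "\<And>i. i \<in> I \<Longrightarrow> f i differentiable (at x within S)"
  shows "(\<lambda>x. \<Prod>i\<in>I. f i x) differentiable (at x within S)"
proof -
  obtain D where "\<And>i. i \<in> I \<Longrightarrow> (f i has_derivative D i) (at x within S)"
    using assms unfolding differentiable_def by metis
  then show ?thesis
    unfolding differentiable_def by (blast intro: has_derivative_prod)
qed

lemma differentiable_If_const [derivative_intros]:
  "f differentiable F \<Longrightarrow> g differentiable F \<Longrightarrow> (\<lambda>x. if P then f x else g x) differentiable F"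
  by (cases P) auto

lemma differentiable_norm_squared [derivative_intros]:
  fixes f :: "'a::real_normed_vector \<Rightarrow> 'b::real_inner"
  shows "f differentiable (at x) \<Longrightarrow> (\<lambda>x. (norm (f x))\<^sup>2) differentiable (at x)"
  unfolding power2_norm_eq_inner by simp

lemma differentiable_compose_DERIV:
  fixes f :: "'a::real_normed_vector \<Rightarrow> real"
  assumes "(g has_real_derivative g') (at (f x))" and "f differentiable (at x)"
  shows "(\<lambda>x. g (f x)) differentiable (at x)"
  by (rule differentiable_compose[OF _ assms(2)])
    (use assms(1) in \<open>auto simp: real_differentiable_def\<close>)

lemma differentiable_matrix_mult [derivative_intros]:
  fixes f :: "'a::euclidean_space \<Rightarrow> real^'k::finite^'m::finite"
    and g :: "'a \<Rightarrow> real^'n::finite^'k"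
  assumes "f differentiable (at x)" and "g differentiable (at x)"
  shows "(\<lambda>x. f x ** g x) differentiable (at x)"
  unfolding matrix_matrix_mult_def using assms by (auto intro!: derivative_intros)

lemma differentiable_bias1 [derivative_intros]:
  fixes f :: "'a::euclidean_space \<Rightarrow> real^'m::finite"
  assumes "f differentiable (at x)"
  shows "(\<lambda>x. bias1 (f x) :: real^'n::finite^'m) differentiable (at x)"
  unfolding bias1_def using assms by (intro derivative_intros)

lemma differentiable_act:
  fixes f :: "'a::euclidean_space \<Rightarrow> real^'n::finite^'m::finite"
  assumes "\<And>t. (\<sigma> has_real_derivative \<sigma>' t) (at t)" and "f differentiable (at x)"
  shows "(\<lambda>x. act \<sigma> (f x)) differentiable (at x)"
  unfolding act_def
  by (intro differentiable_vec_lambda differentiable_compose_DERIV[OF assms(1)]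
      differentiable_vec_nth assms(2))

lemma xent_eq: "xent z \<alpha> = - (\<Sum>j\<in>UNIV. \<alpha> $ j * (z $ j - ln (\<Sum>k\<in>UNIV. exp (z $ k))))"
proof -
  have "(\<Sum>k\<in>UNIV. exp (z $ k)) > 0"
    by (rule sum_pos) auto
  then show ?thesis
    unfolding xent_def by (simp add: ln_div)
qed

lemma differentiable_Lvec [derivative_intros]:
  fixes f :: "'a::euclidean_space \<Rightarrow> real^'n::finite^'j::finite"
  assumes "f differentiable (at x)"
  shows "(\<lambda>x. Lvec (f x) A) differentiable (at x)"
proof -
  have "(\<lambda>x. ln (\<Sum>k\<in>UNIV. exp (f x $ k $ i))) differentiable (at x)" for i
  proof (rule differentiable_compose_DERIV[OF DERIV_ln])
    show "0 < (\<Sum>k\<in>UNIV. exp (f x $ k $ i))"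
      by (rule sum_pos) auto
    show "(\<lambda>x. \<Sum>k\<in>UNIV. exp (f x $ k $ i)) differentiable (at x)"
      by (auto intro!: derivative_intros differentiable_compose_DERIV[OF DERIV_exp] assms)
  qed
  then show ?thesis
    unfolding Lvec_def xent_eq column_def using assms by (simp add: derivative_intros)
qed

lemma Wnorm_squared:
  "(Wnorm L p j)\<^sup>2 =
     (if j = 1 then (norm (W1 p))\<^sup>2 else if j = L then (norm (WL p))\<^sup>2 else (norm (Wm p j))\<^sup>2)"
  by (simp add: Wnorm_def)

lemma differentiable_Sobj_WL:
  assumes "\<And>t. (\<sigma> has_real_derivative \<sigma>' t) (at t)"
  shows "(\<lambda>u. Sobj \<sigma> X A L (p\<lparr>WL := u\<rparr>)) differentiable (at u)"
  unfolding Sobj_def omega_def Wnorm_squared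
  by (simp, intro differentiable_norm_squared derivative_intros differentiable_act[OF assms]
      ballI finite_atLeastAtMost) auto

lemma differentiable_Sobj_cc:
  assumes "\<And>t. (\<sigma> has_real_derivative \<sigma>' t) (at t)"
  shows "(\<lambda>v. Sobj \<sigma> X A L (p\<lparr>cc := (cc p)(l := v)\<rparr>)) differentiable (at v)"
  unfolding Sobj_def omega_def Wnorm_squared
  by (simp, intro differentiable_norm_squared derivative_intros differentiable_act[OF assms]
      ballI finite_atLeastAtMost) auto

lemma GDERIV_unique:
  assumes "GDERIV f x :> D1" and "GDERIV f x :> D2"
  shows "D1 = D2"
proof -
  have "(\<lambda>h. inner h D1) = (\<lambda>h. inner h D2)"
    using assms unfolding gderiv_def by (rule has_derivative_unique)
  then have "inner (D1 - D2) (D1 - D2) = 0"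
    by (metis inner_diff_right right_minus_eq)
  then show ?thesis
    by simp
qed

lemma GDERIV_grad:
  fixes f :: "'a::euclidean_space \<Rightarrow> real"
  assumes "f differentiable (at x)"
  shows "GDERIV f x :> grad f x"
proof -
  obtain D where D: "(f has_derivative D) (at x)"
    using assms unfolding differentiable_def by blast
  have "D = (\<lambda>h. inner h (adjoint D 1))"
    using adjoint_works[OF has_derivative_linear[OF D], of _ 1] by auto
  with D have G: "GDERIV f x :> adjoint D 1"
    unfolding gderiv_def by simp
  then have "grad f x = adjoint D 1"
    unfolding grad_def by (rule the_equality) (rule GDERIV_unique[OF _ G])
  with G show ?thesis
    by simp
qed

lemma descent_lemma:
  fixes f :: "'a::euclidean_space \<Rightarrow> real"
  assumes grad: "\<And>z. z \<in> S \<Longrightarrow> GDERIV f z :> g z" and "convex S"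
    and lip: "lipschitz_on C S g" and x: "x \<in> S" and y: "y \<in> S"
  shows "f y \<le> f x + inner (g x) (y - x) + C / 2 * (norm (y - x))\<^sup>2"
proof -
  define d where "d = y - x"
  define \<phi> where "\<phi> t = f (x + t *\<^sub>R d) - t * inner (g x) d - C / 2 * t\<^sup>2 * (norm d)\<^sup>2" for t
  have "\<phi> 1 \<le> \<phi> 0"
  proof (rule DERIV_nonpos_imp_nonincreasing[of 0 1 \<phi>])
    fix t :: real
    assume t: "0 \<le> t" "t \<le> 1"
    define z where "z = x + t *\<^sub>R d"
    have "z = (1 - t) *\<^sub>R x + t *\<^sub>R y"
      by (simp add: z_def d_def algebra_simps)
    then have z: "z \<in> S"
      using convexD[OF \<open>convex S\<close> x y, of "1 - t" t] t by simp
    have "((\<lambda>t. x + t *\<^sub>R d) has_derivative (\<lambda>s. s *\<^sub>R d)) (at t)"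
      by (auto intro!: derivative_eq_intros)
    from has_derivative_compose[OF this grad[OF z, unfolded gderiv_def z_def]]
    have "((\<lambda>t. f (x + t *\<^sub>R d)) has_derivative (\<lambda>s. inner (s *\<^sub>R d) (g z))) (at t)"
      by (simp add: o_def z_def)
    then have f_deriv: "((\<lambda>t. f (x + t *\<^sub>R d)) has_real_derivative inner d (g z)) (at t)"
      by (rule has_derivative_imp_has_field_derivative) simp
    have D: "(\<phi> has_real_derivative inner d (g z) - inner (g x) d - C * t * (norm d)\<^sup>2) (at t)"
      unfolding \<phi>_def by (rule derivative_eq_intros f_deriv | simp)+
    have "inner d (g z) - inner (g x) d = inner (g z - g x) d"
      by (simp add: inner_diff_left inner_diff_right inner_commute)
    also have "\<dots> \<le> norm (g z - g x) * norm d"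
      by (rule norm_cauchy_schwarz)
    also have "\<dots> \<le> C * norm (z - x) * norm d"
      by (rule mult_right_mono[OF lipschitz_on_normD[OF lip z x]]) simp
    also have "\<dots> = C * t * (norm d)\<^sup>2"
      using t by (simp add: z_def power2_eq_square)
    finally have "inner d (g z) - inner (g x) d - C * t * (norm d)\<^sup>2 \<le> 0"
      by simp
    with D show "\<exists>y. (\<phi> has_real_derivative y) (at t) \<and> y \<le> 0"
      by blast
  qed simp
  then show ?thesis
    by (simp add: \<phi>_def d_def)
qed

lemma gradient_step_nonincreasing:
  fixes f :: "'a::euclidean_space \<Rightarrow> real"
  assumes "\<And>z. z \<in> S \<Longrightarrow> GDERIV f z :> g z" and "convex S" and "lipschitz_on C S g"
    and "x \<in> S" and "x - \<tau> *\<^sub>R g x \<in> S" and "0 < \<tau>" and "\<tau> \<le> 2 / C"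
  shows "f (x - \<tau> *\<^sub>R g x) \<le> f x"
proof -
  have "0 < 2 / C"
    using assms(6,7) by linarith
  then have "0 < C"
    by (simp add: zero_less_divide_iff)
  with assms(7) have "C * \<tau> \<le> 2"
    by (simp add: field_simps)
  with \<open>0 < \<tau>\<close> have "0 \<le> \<tau> * (1 - C * \<tau> / 2) * (norm (g x))\<^sup>2"
    by simp
  moreover have "f (x - \<tau> *\<^sub>R g x) \<le> f x - \<tau> * (1 - C * \<tau> / 2) * (norm (g x))\<^sup>2"
    using descent_lemma[OF assms(1-5)]
    by (simp add: power2_eq_square algebra_simps flip: power2_norm_eq_inner)
  ultimately show ?thesis
    by linarith
qed

definition output_loss :: "(real \<Rightarrow> real) \<Rightarrow> real^'n^'j \<Rightarrow> nat
    \<Rightarrow> ('d::finite,'n::finite,'m::finite,'j::finite) params \<Rightarrow> real" where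
  "output_loss \<sigma> A L p = (norm (Lvec (WL p ** act \<sigma> (cc p (L - 1))) A))\<^sup>2"

lemma Sobj_eq_resid_sum:
  assumes "L \<ge> 2"
  shows "Sobj \<sigma> X A L p = output_loss \<sigma> A L p + (\<Sum>i\<in>{1..L-1}. omega L p i * resid \<sigma> X p i)"
proof -
  have "{1..L-1} = insert 1 {2..L-1}"
    using assms by auto
  moreover have "(\<Sum>i\<in>{2..L-1}. omega L p i * resid \<sigma> X p i) =
      (\<Sum>l\<in>{2..L-1}. omega L p l * (norm (Wm p l ** act \<sigma> (cc p (l - 1)) + bias1 (bb p l) - cc p l))\<^sup>2)"
    by (rule sum.cong) (auto simp: resid_def algebra_simps)
  ultimately show ?thesis
    unfolding Sobj_def output_loss_def by (simp add: resid_def algebra_simps)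
qed

lemma omega_split:
  assumes "i < l" and "l \<le> L"
  shows "omega L p i = (\<Prod>j\<in>{i+1..l-1}. (Wnorm L p j)\<^sup>2) * (Wnorm L p l)\<^sup>2 * omega L p l"
proof -
  have split: "{i+1..L} = {i+1..l-1} \<union> insert l {l+1..L}"
    using assms by auto
  show ?thesis
    unfolding omega_def split by (subst prod.union_disjoint) (auto simp: algebra_simps)
qed

lemma omega_nonneg: "omega L p l \<ge> 0"
  unfolding omega_def by (rule prod_nonneg) simp

lemma Sobj_layer_decomp:
  assumes L: "L \<ge> 2" and l: "1 \<le> l" "l \<le> L - 1"
  shows "Sobj \<sigma> X A L p = output_loss \<sigma> A L p + (\<Sum>i\<in>{l+1..L-1}. omega L p i * resid \<sigma> X p i)
          + omega L p l * (resid \<sigma> X p l + lam \<sigma> X L p l * (Wnorm L p l)\<^sup>2)"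
proof -
  have layers: "{1..L-1} = {1..l-1} \<union> insert l {l+1..L-1}"
    using l by auto
  have split: "(\<Sum>i\<in>{1..L-1}. omega L p i * resid \<sigma> X p i) =
      (\<Sum>i\<in>{1..l-1}. omega L p i * resid \<sigma> X p i) + omega L p l * resid \<sigma> X p l
      + (\<Sum>i\<in>{l+1..L-1}. omega L p i * resid \<sigma> X p i)"
    unfolding layers by (subst sum.union_disjoint) auto
  have "(\<Sum>i\<in>{1..l-1}. omega L p i * resid \<sigma> X p i) =
      (\<Sum>i\<in>{1..l-1}. omega L p l * (Wnorm L p l)\<^sup>2 * ((\<Prod>j\<in>{i+1..l-1}. (Wnorm L p j)\<^sup>2) * resid \<sigma> X p i))"
  proof (rule sum.cong)
    fix i
    assume "i \<in> {1..l-1}"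
    then have "i < l" "l \<le> L"
      using l by auto
    then show "omega L p i * resid \<sigma> X p i =
        omega L p l * (Wnorm L p l)\<^sup>2 * ((\<Prod>j\<in>{i+1..l-1}. (Wnorm L p j)\<^sup>2) * resid \<sigma> X p i)"
      by (simp add: omega_split)
  qed simp
  also have "\<dots> = omega L p l * (Wnorm L p l)\<^sup>2 * lam \<sigma> X L p l"
    unfolding lam_def by (simp add: sum_distrib_left)
  finally have lower: "(\<Sum>i\<in>{1..l-1}. omega L p i * resid \<sigma> X p i) =
      omega L p l * (Wnorm L p l)\<^sup>2 * lam \<sigma> X L p l" .
  show ?thesis
    unfolding Sobj_eq_resid_sum[OF L] split lower by (simp add: algebra_simps)
qed

definition layer_variant :: "nat \<Rightarrow> ('d::finite,'n::finite,'m::finite,'j::finite) params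
    \<Rightarrow> ('d,'n,'m,'j) params \<Rightarrow> bool" where
  "layer_variant l p q \<longleftrightarrow> WL q = WL p \<and> cc q = cc p \<and> (l \<noteq> 1 \<longrightarrow> W1 q = W1 p)
     \<and> (\<forall>j. j \<noteq> l \<longrightarrow> Wm q j = Wm p j \<and> bb q j = bb p j)"

lemma Sobj_diff_layer_variant:
  assumes L: "L \<ge> 2" and l: "1 \<le> l" "l \<le> L - 1" and q: "layer_variant l p q"
  shows "Sobj \<sigma> X A L q - Sobj \<sigma> X A L p = omega L p l *
     ((resid \<sigma> X q l + lam \<sigma> X L p l * (Wnorm L q l)\<^sup>2) - (resid \<sigma> X p l + lam \<sigma> X L p l * (Wnorm L p l)\<^sup>2))"
proof -
  have Wnorm_eq: "Wnorm L q j = Wnorm L p j" if "j \<noteq> l" for j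
    using q that unfolding layer_variant_def Wnorm_def by auto
  have resid_eq: "resid \<sigma> X q i = resid \<sigma> X p i" if "i \<noteq> l" for i
    using q that unfolding layer_variant_def resid_def by auto
  have omega_eq: "omega L q i = omega L p i" if "i \<ge> l" for i
    unfolding omega_def by (rule prod.cong) (use that in \<open>auto simp: Wnorm_eq\<close>)
  have "lam \<sigma> X L q l = lam \<sigma> X L p l"
    unfolding lam_def by (intro sum.cong prod.cong arg_cong2[where f = "(*)"]) (auto simp: Wnorm_eq resid_eq)
  moreover have "output_loss \<sigma> A L q = output_loss \<sigma> A L p"
    using q unfolding layer_variant_def output_loss_def by simp
  moreover have "(\<Sum>i\<in>{l+1..L-1}. omega L q i * resid \<sigma> X q i) = (\<Sum>i\<in>{l+1..L-1}. omega L p i * resid \<sigma> X p i)"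
    by (rule sum.cong) (auto simp: omega_eq resid_eq)
  ultimately show ?thesis
    unfolding Sobj_layer_decomp[OF L l, of \<sigma> X A q] Sobj_layer_decomp[OF L l, of \<sigma> X A p] omega_eq[OF order_refl]
    by (simp add: algebra_simps)
qed

lemma Sobj_layer_variant_le:
  assumes "L \<ge> 2" and "1 \<le> l" "l \<le> L - 1" and "layer_variant l p q"
    and "resid \<sigma> X q l + lam \<sigma> X L p l * (Wnorm L q l)\<^sup>2 \<le> resid \<sigma> X p l + lam \<sigma> X L p l * (Wnorm L p l)\<^sup>2"
  shows "Sobj \<sigma> X A L q \<le> Sobj \<sigma> X A L p"
  using Sobj_diff_layer_variant[OF assms(1-4), of \<sigma> X A] omega_nonneg[of L p l] assms(5)
  by (smt (verit) mult_nonneg_nonpos)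

lemma sum_squares_mean_le:
  fixes y :: "'k \<Rightarrow> real"
  assumes "finite K" and "K \<noteq> {}"
  shows "(\<Sum>k\<in>K. ((\<Sum>j\<in>K. y j) / card K - y k)\<^sup>2) \<le> (\<Sum>k\<in>K. (b - y k)\<^sup>2)"
proof -
  define m where "m = (\<Sum>j\<in>K. y j) / card K"
  have "card K > 0"
    using assms by (simp add: card_gt_0_iff)
  then have centered: "(\<Sum>k\<in>K. m - y k) = 0"
    by (simp add: sum_subtractf m_def)
  have "(\<Sum>k\<in>K. (b - y k)\<^sup>2) = (\<Sum>k\<in>K. (m - y k)\<^sup>2 + 2 * (b - m) * (m - y k) + (b - m)\<^sup>2)"
    by (rule sum.cong) (auto simp: power2_eq_square algebra_simps)
  also have "\<dots> = (\<Sum>k\<in>K. (m - y k)\<^sup>2) + 2 * (b - m) * (\<Sum>k\<in>K. m - y k) + card K * (b - m)\<^sup>2"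
    by (simp add: sum.distrib sum_distrib_left)
  finally show ?thesis
    using centered by (simp add: m_def)
qed

lemma norm_squared_matrix: "(norm (Z :: real^'n::finite^'m::finite))\<^sup>2 = (\<Sum>i\<in>UNIV. \<Sum>k\<in>UNIV. (Z $ i $ k)\<^sup>2)"
  unfolding norm_vec_def L2_set_def by (simp add: sum_nonneg)

lemma colmean_least_squares:
  fixes Z c :: "real^'n::finite^'m::finite"
  shows "(norm (Z - (c - bias1 (colmean (c - Z)))))\<^sup>2 \<le> (norm (Z - (c - bias1 b)))\<^sup>2"
  unfolding norm_squared_matrix
proof (rule sum_mono)
  fix i
  have "(\<Sum>k\<in>UNIV. ((\<Sum>j\<in>UNIV. c $ i $ j - Z $ i $ j) / CARD('n) - (c $ i $ k - Z $ i $ k))\<^sup>2)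
        \<le> (\<Sum>k\<in>UNIV. (b $ i - (c $ i $ k - Z $ i $ k))\<^sup>2)"
    by (rule sum_squares_mean_le) auto
  then show "(\<Sum>k\<in>UNIV. ((Z - (c - bias1 (colmean (c - Z)))) $ i $ k)\<^sup>2)
      \<le> (\<Sum>k\<in>UNIV. ((Z - (c - bias1 b)) $ i $ k)\<^sup>2)"
    by (simp add: colmean_def bias1_def algebra_simps)
qed

lemma first_layer_update_nonincreasing:
  assumes L: "L \<ge> 2" and W: "is_ls W X (cc p 1 - bias1 (bb p 1)) (lam \<sigma> X L p 1)"
  shows "Sobj \<sigma> X A L (p\<lparr>W1 := W, bb := (bb p)(1 := colmean (cc p 1 - W ** X))\<rparr>) \<le> Sobj \<sigma> X A L p"
    (is "Sobj \<sigma> X A L ?q \<le> _")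
proof -
  have l: "1 \<le> (1::nat)" "1 \<le> L - 1"
    using L by auto
  have "Sobj \<sigma> X A L (p\<lparr>W1 := W\<rparr>) \<le> Sobj \<sigma> X A L p"
    by (rule Sobj_layer_variant_le[OF L l])
      (use W[unfolded is_ls_def, rule_format, of "W1 p"] in \<open>auto simp: layer_variant_def resid_def Wnorm_def\<close>)
  moreover have "Sobj \<sigma> X A L ?q \<le> Sobj \<sigma> X A L (p\<lparr>W1 := W\<rparr>)"
    by (rule Sobj_layer_variant_le[OF L l])
      (use colmean_least_squares[of "W ** X" "cc p 1" "bb p 1"] in \<open>auto simp: layer_variant_def resid_def Wnorm_def\<close>)
  ultimately show ?thesis
    by linarith
qed

lemma hidden_layer_update_nonincreasing:
  assumes L: "L \<ge> 2" and l: "l \<in> {2..L-1}"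
    and W: "is_ls W (act \<sigma> (cc p (l - 1))) (cc p l - bias1 (bb p l)) (lam \<sigma> X L p l)"
  shows "Sobj \<sigma> X A L (p\<lparr>Wm := (Wm p)(l := W),
            bb := (bb p)(l := colmean (cc p l - W ** act \<sigma> (cc p (l - 1))))\<rparr>) \<le> Sobj \<sigma> X A L p"
    (is "Sobj \<sigma> X A L ?q \<le> _")
proof -
  have l': "1 \<le> l" "l \<le> L - 1" "l \<noteq> 1" "l \<noteq> L"
    using l by auto
  have "Sobj \<sigma> X A L (p\<lparr>Wm := (Wm p)(l := W)\<rparr>) \<le> Sobj \<sigma> X A L p"
    by (rule Sobj_layer_variant_le[OF L l'(1,2)])
      (use W[unfolded is_ls_def, rule_format, of "Wm p l"] l' in \<open>auto simp: layer_variant_def resid_def Wnorm_def\<close>)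
  moreover have "Sobj \<sigma> X A L ?q \<le> Sobj \<sigma> X A L (p\<lparr>Wm := (Wm p)(l := W)\<rparr>)"
    by (rule Sobj_layer_variant_le[OF L l'(1,2)])
      (use colmean_least_squares[of "W ** act \<sigma> (cc p (l - 1))" "cc p l" "bb p l"] l'
        in \<open>auto simp: layer_variant_def resid_def Wnorm_def\<close>)
  ultimately show ?thesis
    by linarith
qed

lemma layer_step_keeps_WL: "layer_step \<sigma> X A L l \<tau> p q \<Longrightarrow> WL q = WL p"
  unfolding layer_step_def Let_def by (auto split: if_splits)

lemma layer_step_nonincreasing:
  assumes \<sigma>: "\<And>t. (\<sigma> has_real_derivative \<sigma>' t) (at t)"
    and L: "L \<ge> 2" and l: "l \<in> {1..L-1}" and \<tau>: "0 < \<tau>" "\<tau> \<le> 2 / C"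
    and lip: "lipschitz_on C UNIV (grad (\<lambda>u. Sobj \<sigma> X A L (p\<lparr>cc := (cc p)(l := u)\<rparr>)))"
    and step: "layer_step \<sigma> X A L l \<tau> p q"
  shows "Sobj \<sigma> X A L q \<le> Sobj \<sigma> X A L p"
proof -
  define f where "f = (\<lambda>u. Sobj \<sigma> X A L (p\<lparr>cc := (cc p)(l := u)\<rparr>))"
  define p1 where "p1 = p\<lparr>cc := (cc p)(l := cc p l - \<tau> *\<^sub>R grad f (cc p l))\<rparr>"
  have "f (cc p l - \<tau> *\<^sub>R grad f (cc p l)) \<le> f (cc p l)"
    by (rule gradient_step_nonincreasing[where S = UNIV])
      (use GDERIV_grad[OF differentiable_Sobj_cc[OF \<sigma>]] lip \<tau> in \<open>simp_all add: f_def\<close>)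
  then have "Sobj \<sigma> X A L p1 \<le> Sobj \<sigma> X A L p"
    by (simp add: f_def p1_def)
  moreover have "Sobj \<sigma> X A L q \<le> Sobj \<sigma> X A L p1"
  proof (cases "l = 1")
    case True
    with step obtain W where "is_ls W X (cc p1 1 - bias1 (bb p1 1)) (lam \<sigma> X L p1 1)"
      and "q = p1\<lparr>W1 := W, bb := (bb p1)(1 := colmean (cc p1 1 - W ** X))\<rparr>"
      unfolding layer_step_def Let_def p1_def f_def by auto
    then show ?thesis
      using first_layer_update_nonincreasing[OF L] by blast
  next
    case False
    with step obtain W where "is_ls W (act \<sigma> (cc p1 (l - 1))) (cc p1 l - bias1 (bb p1 l)) (lam \<sigma> X L p1 l)"
      and "q = p1\<lparr>Wm := (Wm p1)(l := W),
                bb := (bb p1)(l := colmean (cc p1 l - W ** act \<sigma> (cc p1 (l - 1))))\<rparr>"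
      unfolding layer_step_def Let_def p1_def f_def by auto
    moreover have "l \<in> {2..L-1}"
      using l False by auto
    ultimately show ?thesis
      using hidden_layer_update_nonincreasing[OF L] by blast
  qed
  ultimately show ?thesis
    by linarith
qed

lemma WL_step_nonincreasing:
  assumes \<sigma>: "\<And>t. (\<sigma> has_real_derivative \<sigma>' t) (at t)" and \<tau>: "0 < \<tau>" "\<tau> \<le> 2 / C"
    and lip: "lipschitz_on C (cball 0 R) (grad (\<lambda>u. Sobj \<sigma> X A L (p\<lparr>WL := u\<rparr>)))"
    and "norm (WL p) \<le> R" and "norm (WL (WL_step \<sigma> X A L \<tau> p)) \<le> R"
  shows "Sobj \<sigma> X A L (WL_step \<sigma> X A L \<tau> p) \<le> Sobj \<sigma> X A L p"
proof -
  define f where "f = (\<lambda>u. Sobj \<sigma> X A L (p\<lparr>WL := u\<rparr>))"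
  have "f (WL p - \<tau> *\<^sub>R grad f (WL p)) \<le> f (WL p)"
    by (rule gradient_step_nonincreasing[where S = "cball 0 R"])
      (use GDERIV_grad[OF differentiable_Sobj_WL[OF \<sigma>]] lip \<tau> assms(5,6)
        in \<open>simp_all add: f_def WL_step_def\<close>)
  then show ?thesis
    by (simp add: f_def WL_step_def)
qed

lemma iteration_nonincreasing:
  fixes s :: "nat \<Rightarrow> ('d::finite,'n::finite,'m::finite,'j::finite) params"
  assumes \<sigma>: "\<And>t. (\<sigma> has_real_derivative \<sigma>' t) (at t)" and L: "L \<ge> 2"
    and \<tau>: "\<And>l. l \<in> {1..L} \<Longrightarrow> 0 < \<tau> l \<and> \<tau> l \<le> 2 / C l"
    and first: "s 1 = WL_step \<sigma> X A L (\<tau> L) (s 0)"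
    and layer: "\<And>n. n \<in> {1..<L} \<Longrightarrow> layer_step \<sigma> X A L (L - n) (\<tau> (L - n)) (s n) (s (Suc n))"
    and lip_WL: "lipschitz_on (C L) (cball 0 R) (grad (\<lambda>u. Sobj \<sigma> X A L ((s 0)\<lparr>WL := u\<rparr>)))"
    and lip_c: "\<And>n. n \<in> {1..<L} \<Longrightarrow> lipschitz_on (C (L - n)) UNIV
                  (grad (\<lambda>u. Sobj \<sigma> X A L ((s n)\<lparr>cc := (cc (s n))(L - n := u)\<rparr>)))"
    and norm_start: "norm (WL (s 0)) \<le> R" and norm_end: "norm (WL (s L)) \<le> R"
  shows "Sobj \<sigma> X A L (s L) \<le> Sobj \<sigma> X A L (s 0)"
proof -
  have "WL (s n) = WL (s 1)" if "1 \<le> n" "n \<le> L" for n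
    using that by (induction n rule: dec_induct) (use layer_step_keeps_WL[OF layer] in auto)
  from this[of L] L norm_end have norm_first: "norm (WL (s 1)) \<le> R"
    by simp
  have "Sobj \<sigma> X A L (s (Suc n)) \<le> Sobj \<sigma> X A L (s n)" if "n < L" for n
  proof (cases "n = 0")
    case True
    have "Sobj \<sigma> X A L (WL_step \<sigma> X A L (\<tau> L) (s 0)) \<le> Sobj \<sigma> X A L (s 0)"
      by (rule WL_step_nonincreasing[OF \<sigma> _ _ lip_WL norm_start])
        (use \<tau>[of L] L norm_first first in auto)
    with True first show ?thesis
      by (metis One_nat_def)
  next
    case False
    with that have n: "n \<in> {1..<L}"
      by simp
    then have "L - n \<in> {1..L-1}"
      by auto
    with n show ?thesis
      using layer_step_nonincreasing[OF \<sigma> L _ _ _ lip_c layer] \<tau>[of "L - n"] by auto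
  qed
  then show ?thesis
    by (rule lift_Suc_antimono_le_ivl[of "{..<L}"]) auto
qed

theorem theorem3p4:
  fixes \<sigma> \<sigma>' \<sigma>'' :: "real \<Rightarrow> real"
    and X :: "real^'n::finite^'d::finite"
    and A :: "real^'n^'j::finite"
    and L :: nat
    and M0 M1 M2 R :: real
    and C :: "nat \<Rightarrow> real"
    and \<tau> :: "nat \<Rightarrow> nat \<Rightarrow> real"
    and st :: "nat \<Rightarrow> nat \<Rightarrow> ('d,'n,'m::finite,'j) params"
  assumes L2: "L \<ge> 2"
    and J2: "CARD('j) \<ge> 2"
    and A_onehot: "onehot_cols A"
    and d1: "\<And>x. (\<sigma> has_real_derivative \<sigma>' x) (at x)"
    and d2: "\<And>x. (\<sigma>' has_real_derivative \<sigma>'' x) (at x)"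
    and d2_cont: "continuous_on UNIV \<sigma>''"
    and M_pos: "M0 > 0" "M1 > 0" "M2 > 0"
    and bnd0: "\<And>x. \<bar>\<sigma> x\<bar> \<le> M0"
    and bnd1: "\<And>x. \<bar>\<sigma>' x\<bar> \<le> M1"
    and bnd2: "\<And>x. \<bar>\<sigma>'' x\<bar> \<le> M2"
    and R_pos: "R > 0"
    and C_pos: "\<And>l. l \<in> {1..L} \<Longrightarrow> C l > 0"
    and tau: "\<And>l k. l \<in> {1..L} \<Longrightarrow> 0 < \<tau> l k \<and> \<tau> l k \<le> 2 / C l"
    \<comment> \<open>st k 0 = Theta^k; st k 1 = after the W_L update; st k (L - l + 1) = after layer l.\<close>
    and run_next: "\<And>k. st (Suc k) 0 = st k L"
    and run_WL: "\<And>k. st k 1 = WL_step \<sigma> X A L (\<tau> L k) (st k 0)"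
    and run_layer: "\<And>k l. l \<in> {1..L-1} \<Longrightarrow>
                      layer_step \<sigma> X A L l (\<tau> l k) (st k (L - l)) (st k (L - l + 1))"
    and norm_W1: "\<And>k. norm (W1 (st k 0)) \<le> R"
    and norm_Wm: "\<And>k l. l \<in> {2..L-1} \<Longrightarrow> norm (Wm (st k 0) l) \<le> R"
    and norm_WL: "\<And>k. norm (WL (st k 0)) \<le> R"
    and norm_b: "\<And>k l. l \<in> {1..L-1} \<Longrightarrow> norm (bb (st k 0) l) \<le> R"
    and norm_c: "\<And>k l. l \<in> {1..L-1} \<Longrightarrow> norm (cc (st k 0) l) \<le> R"
    and lip_c: "\<And>k l. l \<in> {1..L-1} \<Longrightarrow>
                  lipschitz_on (C l) UNIV
                    (\<lambda>v. grad (\<lambda>u. Sobj \<sigma> X A L ((st k (L - l))\<lparr>cc := (cc (st k (L - l)))(l := u)\<rparr>)) v)"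
    and lip_WL: "\<And>k. lipschitz_on (C L) (cball 0 R)
                    (\<lambda>w. grad (\<lambda>u. Sobj \<sigma> X A L ((st k 0)\<lparr>WL := u\<rparr>)) w)"
  shows "\<forall>k. Sobj \<sigma> X A L (st (Suc k) 0) \<le> Sobj \<sigma> X A L (st k 0)"
proof
  fix k
  have "L - (L - n) = n" and "L - n \<in> {1..L-1}" if "n \<in> {1..<L}" for n
    using that by auto
  then have layer: "layer_step \<sigma> X A L (L - n) (\<tau> (L - n) k) (st k n) (st k (Suc n))"
    and lip_c': "lipschitz_on (C (L - n)) UNIV
          (grad (\<lambda>u. Sobj \<sigma> X A L ((st k n)\<lparr>cc := (cc (st k n))(L - n := u)\<rparr>)))"
    if "n \<in> {1..<L}" for n
    using that run_layer[of "L - n" k] lip_c[of "L - n" k] by simp_all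
  have "norm (WL (st k L)) \<le> R"
    using norm_WL[of "Suc k"] by (simp add: run_next)
  with iteration_nonincreasing[OF d1 L2 tau run_WL layer lip_WL lip_c' norm_WL]
  show "Sobj \<sigma> X A L (st (Suc k) 0) \<le> Sobj \<sigma> X A L (st k 0)"
    by (simp add: run_next)
qed

end
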